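(* There is a universal constant $C$ such that for every positive integer $s$, every integer $k$ with $0<k<s/2$, and every $x\in\mathbb{R}$, $$|\Phi(y_k)-\Phi(y_k^* )|\le \frac{C}{\sqrt{s}}\big(1+t_k^2\big),$$ where $\Phi$ is the standard normal distribution function.
   Context: For a positive integer $s$, let $X_s$ be the size of an $(s,s+1)$-core with distinct parts chosen uniformly at random (a partition is an $s$-core if no cell of its Ferrers diagram has hook length $s$, where the hook length of a cell is the number of cells strictly to its right plus the number strictly above it plus one; an $(s,s+1)$-core is simultaneously an $s$-core and an $(s+1)$-core; the size is the sum of the parts). Let $\mu$ and $\sigma^2$ be the mean and variance of $X_s$. For integers $0<k<s/2$ put $\mu_k=\tfrac12 k(s+1-k)$ and $\sigma_k^2=\tfrac1{12}k(s+1-k)(s-2k)$ with $\sigma_k>0$, and for $x\in\mathbb{R}$ put $y_k=\frac{1}{\sigma_k}\big((\mu-\mu_k)+x\sigma\big)$. Let $c_0=(5-\sqrt5)/10$, $k_0=\lfloor c_0 s\rfloor$, $t_k=5^{3/4}(k-k_0)/\sqrt{s}$, $a=\sqrt{8/5}$, $b=-\sqrt{3/5}$, and $y_k^*=ax+bt_k$. *)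

theory Defs
  imports "HOL-Probability.Probability"
begin

text \<open>A partition with distinct parts is represented by the finite set P of its parts
(positive naturals). The cells of its Ferrers diagram are the pairs (p, j) with p in P and
1 <= j <= p (row of length p, column j). The hook length of cell (p, j) is
(cells to its right: p - j) + (cells above it in column j, i.e. rows of smaller length q
with j <= q) + 1.\<close>

definition hook_length :: "nat set \<Rightarrow> nat \<Rightarrow> nat \<Rightarrow> nat" where
  "hook_length P p j = (p - j) + card {q \<in> P. j \<le> q \<and> q < p} + 1"

definition is_core :: "nat \<Rightarrow> nat set \<Rightarrow> bool" where
  "is_core t P \<longleftrightarrow> (\<forall>p\<in>P. \<forall>j\<in>{1..p}. hook_length P p j \<noteq> t)"

definition distinct_cores :: "nat \<Rightarrow> nat set set" where
  "distinct_cores s = {P. finite P \<and> 0 \<notin> P \<and> is_core s P \<and> is_core (s + 1) P}"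

definition part_size :: "nat set \<Rightarrow> real" where
  "part_size P = real (\<Sum>P)"

definition core_mean :: "nat \<Rightarrow> real" where
  "core_mean s = (\<Sum>P\<in>distinct_cores s. part_size P) / real (card (distinct_cores s))"

definition core_var :: "nat \<Rightarrow> real" where
  "core_var s = (\<Sum>P\<in>distinct_cores s. (part_size P - core_mean s)\<^sup>2) / real (card (distinct_cores s))"

definition Phi :: "real \<Rightarrow> real" where
  "Phi y = measure (density lborel std_normal_density) {..y}"

definition mu_k :: "nat \<Rightarrow> nat \<Rightarrow> real" where
  "mu_k s k = real k * (real s + 1 - real k) / 2"

definition sigma_k :: "nat \<Rightarrow> nat \<Rightarrow> real" where
  "sigma_k s k = sqrt (real k * (real s + 1 - real k) * (real s - 2 * real k) / 12)"

definition y_k :: "nat \<Rightarrow> nat \<Rightarrow> real \<Rightarrow> real" where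
  "y_k s k x = ((core_mean s - mu_k s k) + x * sqrt (core_var s)) / sigma_k s k"

definition c0 :: real where "c0 = (5 - sqrt 5) / 10"

definition k0 :: "nat \<Rightarrow> int" where "k0 s = \<lfloor>c0 * real s\<rfloor>"

definition t_k :: "nat \<Rightarrow> nat \<Rightarrow> real" where
  "t_k s k = 5 powr (3/4) * (real k - real_of_int (k0 s)) / sqrt (real s)"

definition y_k_star :: "nat \<Rightarrow> nat \<Rightarrow> real \<Rightarrow> real" where
  "y_k_star s k x = sqrt (8/5) * x + (- sqrt (3/5)) * t_k s k"

end

(*
  A set of distinct parts is an (s, s + 1)-core iff its largest part plus its number of parts
  is at most s.  Such sets satisfy a Fibonacci recursion (according to whether 1 is a part), which
  gives closed forms for the first and second moments of (size, number of parts) in terms of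
  the Fibonacci numbers F s and F (s + 1).  Since F s / F (s + 1) = (sqrt 5 - 1) / 2 + O(1 / s), the mean is
  s^2 / 10 + O(s) and the variance is (2 sqrt 5 / 375) s^3 + O(s^2).

  Around k = c0 s we have mu_k = s^2 / 10 + (sqrt 5 / 10) s (k - c0 s) + O((1 + t_k^2) s) and
  sigma_k^2 = (sqrt 5 / 300) s^3 (1 + O((|t_k| + 1) / sqrt s)).  Hence y_k = A x + B where
  A and B differ from the coefficients sqrt (8/5) and -sqrt (3/5) t_k of y_k^* by
  O((1 + t_k^2) / sqrt s), and these errors pass to Phi because Phi is 1-Lipschitz and
  |Phi (r u) - Phi u| <= |r - 1| / min r 1.  If (|t_k| + 2) / sqrt s is not small the bound is
  trivial, as Phi takes values in [0, 1].
*)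
theory Submission
  imports Defs "HOL-Number_Theory.Fib"
begin

lemma hook_length_less:
  assumes "finite P" "p \<in> P" "1 \<le> j" "j \<le> p"
  shows "hook_length P p j < p + card P"
proof -
  have "card {q \<in> P. j \<le> q \<and> q < p} \<le> card (P - {p})"
    using assms by (intro card_mono) auto
  moreover have "card P = Suc (card (P - {p}))"
    using card.remove[OF assms(1,2)] .
  ultimately show ?thesis
    using assms unfolding hook_length_def by linarith
qed

lemma slow_descent_hits:
  fixes f :: "nat \<Rightarrow> nat"
  assumes "a \<le> b" "s \<le> f a" "f b \<le> s + 1"
    and steps: "\<And>j. a \<le> j \<Longrightarrow> j < b \<Longrightarrow> f j \<le> f (Suc j) + 2"
  shows "\<exists>j\<in>{a..b}. f j = s \<or> f j = s + 1"
  using assms(1,2)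
proof (induction a rule: inc_induct)
  case base
  then show ?case using assms(3) by force
next
  case (step n)
  show ?case
  proof (cases "f n = s \<or> f n = s + 1")
    case False
    then have "s \<le> f (Suc n)" using step.prems steps[of n] step.hyps by linarith
    then obtain j where "j \<in> {Suc n..b}" "f j = s \<or> f j = s + 1" using step.IH by blast
    then show ?thesis by force
  qed (use step.hyps in force)
qed

text \<open>The hook lengths along the largest row run from \<open>Max P + card P - 1\<close> down to \<open>1\<close> in
  steps of at most \<open>2\<close>, so they cannot jump over both \<open>s\<close> and \<open>s + 1\<close>.\<close>

lemma distinct_core_iff:
  assumes "finite P" "0 \<notin> P"
  shows "is_core s P \<and> is_core (s + 1) P \<longleftrightarrow> (\<forall>p\<in>P. p + card P \<le> s)"
proof
  assume "\<forall>p\<in>P. p + card P \<le> s"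
  then show "is_core s P \<and> is_core (s + 1) P"
    using hook_length_less[OF assms(1)] unfolding is_core_def by fastforce
next
  assume cores: "is_core s P \<and> is_core (s + 1) P"
  show "\<forall>p\<in>P. p + card P \<le> s"
  proof (cases "P = {}")
    case False
    define m where "m = Max P"
    have m: "m \<in> P" and le_m: "\<And>p. p \<in> P \<Longrightarrow> p \<le> m"
      using False assms by (simp_all add: m_def)
    have m_pos: "1 \<le> m" using m assms(2) by (cases m) auto
    define h where "h j = hook_length P m j" for j
    have "m + card P \<le> s"
    proof (rule ccontr)
      assume "\<not> m + card P \<le> s"
      have "{q \<in> P. 1 \<le> q \<and> q < m} = P - {m}"
        using assms(2) le_m m by (auto intro: le_neq_implies_less) (metis Suc_leI gr0I)
      moreover have "1 \<le> card P" using assms(1) m by (auto simp: Suc_le_eq card_gt_0_iff)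
      ultimately have "h 1 = m + card P - 1"
        using assms m m_pos by (simp add: h_def hook_length_def card_Diff_singleton)
      then have "s \<le> h 1" using \<open>\<not> m + card P \<le> s\<close> by linarith
      moreover have "h m = 1" by (simp add: h_def hook_length_def)
      moreover have "h j \<le> h (Suc j) + 2" if "1 \<le> j" "j < m" for j
      proof -
        have "card {q \<in> P. j \<le> q \<and> q < m} \<le> card (insert j {q \<in> P. Suc j \<le> q \<and> q < m})"
          using assms(1) by (intro card_mono) auto
        also have "\<dots> \<le> Suc (card {q \<in> P. Suc j \<le> q \<and> q < m})"
          by (simp add: card_insert_le_m1)
        finally show ?thesis using that by (simp add: h_def hook_length_def)
      qed
      ultimately obtain j where "j \<in> {1..m}" "h j = s \<or> h j = s + 1"
        using slow_descent_hits[OF m_pos, of s h] by auto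
      then show False using cores m unfolding is_core_def h_def by force
    qed
    then show ?thesis using le_m by fastforce
  qed simp
qed

lemma distinct_cores_eq:
  "distinct_cores s = {P. finite P \<and> 0 \<notin> P \<and> (\<forall>p\<in>P. p + card P \<le> s)}"
  unfolding distinct_cores_def using distinct_core_iff by blast

lemma distinct_cores_elem_bounds:
  assumes "P \<in> distinct_cores s" "p \<in> P"
  shows "1 \<le> p" "p + card P \<le> s"
  using assms unfolding distinct_cores_eq by (auto simp: Suc_le_eq intro!: gr0I)

lemma finite_distinct_cores: "finite (distinct_cores s)"
proof (rule finite_subset)
  show "distinct_cores s \<subseteq> Pow {1..s}"
    using distinct_cores_elem_bounds by fastforce
qed auto

lemma distinct_cores_le_1: "s \<le> 1 \<Longrightarrow> distinct_cores s = {{}}"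
proof -
  assume "s \<le> 1"
  have "P = {}" if P: "P \<in> distinct_cores s" for P
  proof (rule ccontr)
    assume "P \<noteq> {}"
    then obtain p where "p \<in> P" by blast
    moreover have "finite P" using P by (simp add: distinct_cores_eq)
    ultimately have "1 \<le> p" "p + card P \<le> s" "1 \<le> card P"
      using distinct_cores_elem_bounds[OF P] by (auto simp: Suc_le_eq card_gt_0_iff)
    then show False using \<open>s \<le> 1\<close> by linarith
  qed
  then show ?thesis by (auto simp: distinct_cores_eq)
qed

lemma Suc_image_pred_image:
  assumes "0 \<notin> A" shows "Suc ` (\<lambda>p. p - 1) ` A = A"
proof -
  have "Suc (p - 1) = p" if "p \<in> A" for p using that assms by (cases p) auto
  then show ?thesis by (simp add: image_image)
qed

lemma sum_Suc_image: "finite Q \<Longrightarrow> \<Sum>(Suc ` Q) = \<Sum>Q + card Q"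
  using sum_Suc[of "\<lambda>x. x" Q] by (simp add: sum.reindex)

lemma card_sum_insert_one_Suc_image:
  assumes "finite Q" "0 \<notin> Q"
  shows "card (insert 1 (Suc ` Q)) = Suc (card Q)"
    and "\<Sum>(insert 1 (Suc ` Q)) = Suc (\<Sum>Q + card Q)"
proof -
  have "1 \<notin> Suc ` Q" using assms(2) by auto
  then show "card (insert 1 (Suc ` Q)) = Suc (card Q)" "\<Sum>(insert 1 (Suc ` Q)) = Suc (\<Sum>Q + card Q)"
    using assms(1) by (simp_all add: card_image sum_Suc_image)
qed

lemma distinct_cores_Suc_Suc_cases:
  assumes "P \<in> distinct_cores (Suc (Suc s))"
  obtains Q where "Q \<in> distinct_cores (Suc s)" "P = Suc ` Q"
    | Q where "Q \<in> distinct_cores s" "P = insert 1 (Suc ` Q)"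
proof -
  have fin: "finite P" and bound: "\<And>p. p \<in> P \<Longrightarrow> p + card P \<le> Suc (Suc s)"
    and "0 \<notin> P"
    using assms by (auto simp: distinct_cores_eq)
  define Q where "Q = (\<lambda>p. p - 1) ` (P - {1})"
  have "0 \<notin> P - {1}" using \<open>0 \<notin> P\<close> by blast
  then have PQ: "P - {1} = Suc ` Q" unfolding Q_def by (rule Suc_image_pred_image[symmetric])
  have Q: "0 \<notin> Q" "finite Q" using PQ fin unfolding Q_def by force+
  show ?thesis
  proof (cases "1 \<in> P")
    case False
    then have P_eq: "P = Suc ` Q" using PQ by simp
    then have "q + card Q \<le> Suc s" if "q \<in> Q" for q
      using bound[of "Suc q"] that by (simp add: card_image)
    with Q have "Q \<in> distinct_cores (Suc s)" by (simp add: distinct_cores_eq)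
    then show ?thesis using P_eq by (rule that(1))
  next
    case True
    then have P_eq: "P = insert 1 (Suc ` Q)" using PQ by blast
    have "card P = Suc (card Q)" using P_eq card_sum_insert_one_Suc_image Q by simp
    then have "q + card Q \<le> s" if "q \<in> Q" for q
      using bound[of "Suc q"] that P_eq by simp
    with Q have "Q \<in> distinct_cores s" by (simp add: distinct_cores_eq)
    then show ?thesis using P_eq by (rule that(2))
  qed
qed

lemma distinct_cores_Suc_Suc:
  "distinct_cores (Suc (Suc s)) =
     (`) Suc ` distinct_cores (Suc s) \<union> (\<lambda>Q. insert 1 (Suc ` Q)) ` distinct_cores s"
proof (intro equalityI subsetI)
  fix P assume "P \<in> distinct_cores (Suc (Suc s))"
  then show "P \<in> (`) Suc ` distinct_cores (Suc s) \<union> (\<lambda>Q. insert 1 (Suc ` Q)) ` distinct_cores s"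
    by (cases rule: distinct_cores_Suc_Suc_cases) auto
next
  fix P assume "P \<in> (`) Suc ` distinct_cores (Suc s) \<union> (\<lambda>Q. insert 1 (Suc ` Q)) ` distinct_cores s"
  then consider Q where "Q \<in> distinct_cores (Suc s)" "P = Suc ` Q"
    | Q where "Q \<in> distinct_cores s" "P = insert 1 (Suc ` Q)"
    by blast
  then show "P \<in> distinct_cores (Suc (Suc s))"
  proof cases
    case 1
    then show ?thesis by (auto simp: distinct_cores_eq card_image)
  next
    case 2
    have "card Q \<le> s"
    proof (cases "Q = {}")
      case False
      then obtain q where "q \<in> Q" by blast
      then show ?thesis using distinct_cores_elem_bounds[OF \<open>Q \<in> distinct_cores s\<close>] by fastforce
    qed simp
    moreover have "finite Q" "0 \<notin> Q" using 2(1) by (simp_all add: distinct_cores_eq)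
    ultimately show ?thesis
      using 2 card_sum_insert_one_Suc_image(1)[of Q] by (auto simp: distinct_cores_eq)
  qed
qed

lemma inj_on_insert_one_Suc_image: "inj_on (\<lambda>Q. insert 1 (Suc ` Q)) {Q. 0 \<notin> Q}"
proof (rule inj_onI)
  fix A B :: "nat set"
  assume "A \<in> {Q. 0 \<notin> Q}" "B \<in> {Q. 0 \<notin> Q}" and "insert 1 (Suc ` A) = insert 1 (Suc ` B)"
  moreover have "1 \<notin> Suc ` A" "1 \<notin> Suc ` B" using calculation(1,2) by auto
  ultimately have "Suc ` A = Suc ` B" by (metis Diff_insert_absorb)
  then show "A = B" by (simp add: inj_image_eq_iff)
qed

lemma sum_distinct_cores_Suc_Suc:
  fixes g :: "nat \<Rightarrow> nat \<Rightarrow> 'a::comm_monoid_add"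
  shows "(\<Sum>P\<in>distinct_cores (Suc (Suc s)). g (\<Sum>P) (card P)) =
     (\<Sum>Q\<in>distinct_cores (Suc s). g (\<Sum>Q + card Q) (card Q)) +
     (\<Sum>Q\<in>distinct_cores s. g (\<Sum>Q + card Q + 1) (card Q + 1))"
proof -
  have fin: "finite Q" "0 \<notin> Q" if "Q \<in> distinct_cores n" for Q n
    using that by (simp_all add: distinct_cores_eq)
  have inj_shift: "inj_on ((`) Suc) (distinct_cores (Suc s))"
    by (meson inj_onI inj_Suc inj_image_eq_iff)
  have inj_add_one: "inj_on (\<lambda>Q. insert 1 (Suc ` Q)) (distinct_cores s)"
    using fin(2) by (blast intro: inj_on_subset[OF inj_on_insert_one_Suc_image])
  have "1 \<notin> Suc ` Q" if "Q \<in> distinct_cores (Suc s)" for Q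
    using fin(2)[OF that] by auto
  then have disjoint:
    "(`) Suc ` distinct_cores (Suc s) \<inter> (\<lambda>Q. insert 1 (Suc ` Q)) ` distinct_cores s = {}"
    by blast
  have "(\<Sum>P\<in>distinct_cores (Suc (Suc s)). g (\<Sum>P) (card P)) =
      (\<Sum>P\<in>(`) Suc ` distinct_cores (Suc s). g (\<Sum>P) (card P)) +
      (\<Sum>P\<in>(\<lambda>Q. insert 1 (Suc ` Q)) ` distinct_cores s. g (\<Sum>P) (card P))"
    unfolding distinct_cores_Suc_Suc using finite_distinct_cores disjoint
    by (intro sum.union_disjoint) auto
  also have "(\<Sum>P\<in>(`) Suc ` distinct_cores (Suc s). g (\<Sum>P) (card P)) =
      (\<Sum>Q\<in>distinct_cores (Suc s). g (\<Sum>Q + card Q) (card Q))"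
    by (intro sum.reindex_cong[OF inj_shift refl]) (simp add: fin sum_Suc_image card_image)
  also have "(\<Sum>P\<in>(\<lambda>Q. insert 1 (Suc ` Q)) ` distinct_cores s. g (\<Sum>P) (card P)) =
      (\<Sum>Q\<in>distinct_cores s. g (\<Sum>Q + card Q + 1) (card Q + 1))"
  proof (rule sum.reindex_cong[OF inj_add_one refl])
    fix Q assume "Q \<in> distinct_cores s"
    then show "g (\<Sum>(insert 1 (Suc ` Q))) (card (insert 1 (Suc ` Q))) = g (\<Sum>Q + card Q + 1) (card Q + 1)"
      using card_sum_insert_one_Suc_image[OF fin] by simp
  qed
  finally show ?thesis .
qed

definition core_moment :: "(real \<Rightarrow> real \<Rightarrow> real) \<Rightarrow> nat \<Rightarrow> real" where
  "core_moment g s = (\<Sum>P\<in>distinct_cores s. g (real (\<Sum>P)) (real (card P)))"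

lemma core_moment_Suc_Suc:
  "core_moment g (Suc (Suc s)) =
     core_moment (\<lambda>x c. g (x + c) c) (Suc s) + core_moment (\<lambda>x c. g (x + c + 1) (c + 1)) s"
  using sum_distinct_cores_Suc_Suc[of "\<lambda>a b. g (real a) (real b)" s]
  by (simp add: core_moment_def ac_simps)

lemma core_moment_le_1: "s \<le> 1 \<Longrightarrow> core_moment g s = g 0 0"
  by (simp add: core_moment_def distinct_cores_le_1)

lemma core_moment_add: "core_moment (\<lambda>x c. f x c + h x c) s = core_moment f s + core_moment h s"
  by (simp add: core_moment_def sum.distrib)

lemma core_moment_cmult: "core_moment (\<lambda>x c. a * f x c) s = a * core_moment f s"
  by (simp add: core_moment_def sum_distrib_left)

lemma core_moment_count: "core_moment (\<lambda>x c. 1) s = real (fib (Suc s))"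
  by (induction s rule: fib.induct) (simp_all add: core_moment_le_1 core_moment_Suc_Suc)

lemma core_moment_length:
  "core_moment (\<lambda>x c. c) s =
     (- 1/5 - real s / 5) * real (fib s) + 2 * real s / 5 * real (fib (Suc s))"
proof (induction s rule: fib.induct)
  case (3 s)
  have "core_moment (\<lambda>x c. c) (Suc (Suc s)) =
      core_moment (\<lambda>x c. c) (Suc s) + core_moment (\<lambda>x c. c) s + core_moment (\<lambda>x c. 1) s"
    by (simp add: core_moment_Suc_Suc core_moment_add)
  then show ?case
    unfolding 3 core_moment_count by (simp add: field_simps)
qed (simp_all add: core_moment_le_1)

lemma core_moment_size:
  "core_moment (\<lambda>x c. x) s =
     (- 3/25 - 3 * real s / 25) * real (fib s) + (7 * real s / 50 + real s^2 / 10) * real (fib (Suc s))"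
proof (induction s rule: fib.induct)
  case (3 s)
  have "core_moment (\<lambda>x c. x) (Suc (Suc s)) =
      core_moment (\<lambda>x c. x) (Suc s) + core_moment (\<lambda>x c. c) (Suc s)
      + core_moment (\<lambda>x c. x) s + core_moment (\<lambda>x c. c) s + core_moment (\<lambda>x c. 1) s"
    by (simp add: core_moment_Suc_Suc core_moment_add)
  then show ?case
    unfolding 3 core_moment_count core_moment_length
    by (simp add: field_simps power2_eq_square)
qed (simp_all add: core_moment_le_1)

lemma core_moment_length_sq:
  "core_moment (\<lambda>x c. c * c) s =
     (1/25 - 4 * real s / 25 - real s^2 / 5) * real (fib s)
     + (3 * real s / 25 + real s^2 / 5) * real (fib (Suc s))"
proof (induction s rule: fib.induct)
  case (3 s)
  have "core_moment (\<lambda>x c. c * c) (Suc (Suc s)) =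
      core_moment (\<lambda>x c. c * c) (Suc s) + core_moment (\<lambda>x c. c * c + 2 * c + 1) s"
    by (simp add: core_moment_Suc_Suc algebra_simps)
  also have "\<dots> = core_moment (\<lambda>x c. c * c) (Suc s) + core_moment (\<lambda>x c. c * c) s
      + 2 * core_moment (\<lambda>x c. c) s + core_moment (\<lambda>x c. 1) s"
    by (simp add: core_moment_add core_moment_cmult)
  finally show ?case
    unfolding 3 core_moment_count core_moment_length
    by (simp add: field_simps power2_eq_square)
qed (simp_all add: core_moment_le_1)

lemma core_moment_size_length:
  "core_moment (\<lambda>x c. x * c) s =
     (- real s / 10 - 3 * real s^2 / 25 - real s^3 / 50) * real (fib s)
     + (real s / 10 + real s^2 / 10 + real s^3 / 25) * real (fib (Suc s))"
proof (induction s rule: fib.induct)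
  case (3 s)
  have "core_moment (\<lambda>x c. x * c) (Suc (Suc s)) =
      core_moment (\<lambda>x c. x * c + c * c) (Suc s)
      + core_moment (\<lambda>x c. x * c + c * c + x + 2 * c + 1) s"
    by (simp add: core_moment_Suc_Suc algebra_simps)
  also have "\<dots> = core_moment (\<lambda>x c. x * c) (Suc s) + core_moment (\<lambda>x c. c * c) (Suc s)
      + core_moment (\<lambda>x c. x * c) s + core_moment (\<lambda>x c. c * c) s + core_moment (\<lambda>x c. x) s
      + 2 * core_moment (\<lambda>x c. c) s + core_moment (\<lambda>x c. 1) s"
    by (simp add: core_moment_add core_moment_cmult)
  finally show ?case
    unfolding 3 core_moment_count core_moment_length core_moment_size core_moment_length_sq
    by (simp add: field_simps power2_eq_square power3_eq_cube)
qed (simp_all add: core_moment_le_1)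

lemma core_moment_size_sq:
  "core_moment (\<lambda>x c. x * x) s =
     (- 3/125 - 19 * real s / 375 - real s^2 / 25 - real s^3 / 75) * real (fib s)
     + (13 * real s / 375 + real s^2 / 20 + real s^3 / 30 + real s^4 / 100) * real (fib (Suc s))"
proof (induction s rule: fib.induct)
  case (3 s)
  have "core_moment (\<lambda>x c. x * x) (Suc (Suc s)) =
      core_moment (\<lambda>x c. x * x + 2 * (x * c) + c * c) (Suc s)
      + core_moment (\<lambda>x c. x * x + 2 * (x * c) + c * c + 2 * x + 2 * c + 1) s"
    by (simp add: core_moment_Suc_Suc algebra_simps)
  also have "\<dots> = core_moment (\<lambda>x c. x * x) (Suc s) + 2 * core_moment (\<lambda>x c. x * c) (Suc s)
      + core_moment (\<lambda>x c. c * c) (Suc s) + core_moment (\<lambda>x c. x * x) s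
      + 2 * core_moment (\<lambda>x c. x * c) s + core_moment (\<lambda>x c. c * c) s
      + 2 * core_moment (\<lambda>x c. x) s + 2 * core_moment (\<lambda>x c. c) s + core_moment (\<lambda>x c. 1) s"
    by (simp add: core_moment_add core_moment_cmult)
  finally show ?case
    unfolding 3 core_moment_count core_moment_length core_moment_size core_moment_length_sq
      core_moment_size_length
    by (simp add: field_simps power2_eq_square power3_eq_cube power4_eq_xxxx)
qed (simp_all add: core_moment_le_1)

lemma fib_Suc_ge: "n \<le> fib (Suc n)"
proof (induction n rule: fib.induct)
  case (3 n)
  have "1 \<le> fib (Suc n)" using fib_neq_0_nat[of "Suc n"] by simp
  with 3 show ?case by simp
qed simp_all

lemma fib_Suc_minus_golden: "fib (Suc n) - (1 + sqrt 5) / 2 * fib n = ((1 - sqrt 5) / 2) ^ n"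
  unfolding fib_closed_form by (simp add: field_simps)

lemma fib_ratio_approx:
  assumes "1 \<le> n"
  shows "\<bar>fib n / fib (Suc n) - (sqrt 5 - 1) / 2\<bar> \<le> 1 / n"
proof -
  define \<phi> :: real where "\<phi> = (1 + sqrt 5) / 2"
  have pos: "0 < real (fib (Suc n))" using fib_neq_0_nat[of "Suc n"] by simp
  have "0 < 1 + sqrt (5::real)" by (simp add: add_pos_nonneg)
  moreover have "(sqrt 5 - 1) * (1 + sqrt 5) = (4::real)" by (simp add: algebra_simps)
  ultimately have \<phi>: "1 \<le> \<phi>" "(sqrt 5 - 1) / 2 = 1 / \<phi>" by (auto simp: \<phi>_def field_simps)
  have "fib n / fib (Suc n) - 1 / \<phi> = - (fib (Suc n) - \<phi> * fib n) / (\<phi> * fib (Suc n))"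
    using pos \<phi> by (simp add: field_simps)
  then have "\<bar>fib n / fib (Suc n) - 1 / \<phi>\<bar> = \<bar>(1 - sqrt 5) / 2\<bar> ^ n / (\<phi> * fib (Suc n))"
    using pos \<phi> by (simp add: fib_Suc_minus_golden[folded \<phi>_def] abs_mult power_abs)
  also have "\<dots> \<le> 1 / (1 * fib (Suc n))"
    using pos \<phi> by (intro frac_le mult_right_mono power_le_one) (auto simp: abs_le_iff)
  also have "\<dots> \<le> 1 / n"
    using assms fib_Suc_ge[of n] by (simp add: frac_le)
  finally show ?thesis by (simp add: \<phi>)
qed

lemma card_distinct_cores: "real (card (distinct_cores s)) = fib (Suc s)"
  using core_moment_count[of s] by (simp add: core_moment_def)

lemma core_mean_eq: "core_mean s = core_moment (\<lambda>x c. x) s / fib (Suc s)"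
  by (simp add: core_mean_def core_moment_def part_size_def card_distinct_cores)

lemma core_var_eq: "core_var s = core_moment (\<lambda>x c. x * x) s / fib (Suc s) - (core_mean s)\<^sup>2"
proof -
  have pos: "0 < real (fib (Suc s))" using fib_neq_0_nat[of "Suc s"] by simp
  have "(\<Sum>P\<in>distinct_cores s. (part_size P - core_mean s)\<^sup>2) =
      (\<Sum>P\<in>distinct_cores s. (part_size P)\<^sup>2) - 2 * core_mean s * (\<Sum>P\<in>distinct_cores s. part_size P)
      + (core_mean s)\<^sup>2 * card (distinct_cores s)"
    by (simp add: power2_diff sum.distrib sum_subtractf sum_distrib_left algebra_simps)
  also have "\<dots> = core_moment (\<lambda>x c. x * x) s - (core_mean s)\<^sup>2 * fib (Suc s)"
    using pos by (simp add: core_mean_eq core_moment_def part_size_def card_distinct_cores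
        power2_eq_square field_simps)
  finally show ?thesis
    using pos by (simp add: core_var_def card_distinct_cores field_simps)
qed

lemma core_mean_approx:
  assumes "1 \<le> s"
  shows "\<bar>core_mean s - real s ^ 2 / 10\<bar> \<le> real s"
proof -
  define r where "r = fib s / fib (Suc s)"
  have pos: "0 < real (fib (Suc s))" using fib_neq_0_nat[of "Suc s"] by simp
  have r: "0 \<le> r" "r \<le> 1" using fib_Suc_mono[of s] pos by (auto simp: r_def)
  have "core_mean s - real s ^ 2 / 10 = 7 * real s / 50 - 3 / 25 * r - 3 / 25 * (real s * r)"
    using pos unfolding core_mean_eq core_moment_size r_def by (simp add: field_simps)
  moreover have "0 \<le> real s * r" "real s * r \<le> real s" "1 \<le> real s"
    using r assms by (auto intro: mult_left_le)
  ultimately show ?thesis using r unfolding abs_le_iff by linarith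
qed

lemma core_var_approx:
  assumes "1 \<le> s"
  shows "\<bar>core_var s - 2 * sqrt 5 / 375 * real s ^ 3\<bar> \<le> 2 * real s ^ 2"
proof -
  define r where "r = fib s / fib (Suc s)"
  define S where "S = real s"
  have pos: "0 < real (fib (Suc s))" using fib_neq_0_nat[of "Suc s"] by simp
  have r: "0 \<le> r" "r \<le> 1" using fib_Suc_mono[of s] pos by (auto simp: r_def)
  have S: "1 \<le> S" using assms by (simp add: S_def)
  define R where "R = - 3/125 * r - 9/625 * r^2 + 13/375 * S - 32/1875 * (S * r)
      - 18/625 * (S * r^2) + 19/625 * S^2 + 11/625 * (S^2 * r) - 9/625 * (S^2 * r^2)"
  have var: "core_var s = (2 + 4 * r) * S^3 / 375 + R"
    using pos unfolding core_var_eq core_mean_eq core_moment_size core_moment_size_sq R_def r_def S_def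
    by (simp add: field_simps power2_eq_square power3_eq_cube power4_eq_xxxx)
  have R_bound: "\<bar>R\<bar> \<le> S^2"
  proof -
    have "0 \<le> r^2" "r^2 \<le> 1" using r by (auto simp: power_le_one)
    moreover have "S \<le> S^2" using S by (simp add: power2_eq_square mult_le_cancel_left1)
    moreover have "1 \<le> S^2" using S by (rule one_le_power)
    moreover have "0 \<le> S * r" "S * r \<le> S" "0 \<le> S * r^2" "S * r^2 \<le> S"
      using r S \<open>r^2 \<le> 1\<close> by (auto intro: mult_left_le)
    moreover have "0 \<le> S^2 * r" "S^2 * r \<le> S^2" "0 \<le> S^2 * r^2" "S^2 * r^2 \<le> S^2"
      using r S \<open>r^2 \<le> 1\<close> by (auto intro: mult_left_le)
    ultimately show ?thesis using r unfolding R_def abs_le_iff by linarith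
  qed
  have ratio_bound: "\<bar>(r - (sqrt 5 - 1) / 2) * S^3\<bar> \<le> S^2"
  proof -
    have "\<bar>r - (sqrt 5 - 1) / 2\<bar> * S^3 \<le> 1 / S * S^3"
      using fib_ratio_approx[OF assms] S by (intro mult_right_mono) (auto simp: r_def S_def)
    also have "\<dots> = S^2" using S by (simp add: power2_eq_square power3_eq_cube)
    finally show ?thesis using S by (simp add: abs_mult)
  qed
  have "core_var s - 2 * sqrt 5 / 375 * S^3 = R + 4/375 * ((r - (sqrt 5 - 1) / 2) * S^3)"
    unfolding var by (simp add: field_simps)
  with R_bound ratio_bound show ?thesis unfolding S_def[symmetric] abs_le_iff by linarith
qed

lemma prob_space_std_normal: "prob_space (density lborel std_normal_density)"
  by (rule prob_space_normal_density) simp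

lemma Phi_bounds: "0 \<le> Phi y" "Phi y \<le> 1"
proof -
  interpret prob_space "density lborel std_normal_density" by (rule prob_space_std_normal)
  show "0 \<le> Phi y" "Phi y \<le> 1" by (simp_all add: Phi_def)
qed

lemma Phi_diff_le:
  assumes "a \<le> b" "0 \<le> K" "\<And>x. a < x \<Longrightarrow> x \<le> b \<Longrightarrow> std_normal_density x \<le> K"
  shows "\<bar>Phi b - Phi a\<bar> \<le> K * (b - a)"
proof -
  interpret prob_space "density lborel std_normal_density" by (rule prob_space_std_normal)
  have "{..b} = {..a} \<union> {a<..b}" using assms(1) by auto
  then have "Phi b = Phi a + prob {a<..b}"
    unfolding Phi_def by (simp only:) (rule finite_measure_Union, auto)
  moreover have "emeasure (density lborel std_normal_density) {a<..b} \<le> ennreal (K * (b - a))"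
  proof -
    have "emeasure (density lborel std_normal_density) {a<..b} =
        (\<integral>\<^sup>+x. ennreal (std_normal_density x) * indicator {a<..b} x \<partial>lborel)"
      by (subst emeasure_density) auto
    also have "\<dots> \<le> (\<integral>\<^sup>+x. ennreal K * indicator {a<..b} x \<partial>lborel)"
      by (intro nn_integral_mono) (auto simp: indicator_def assms(3) intro!: ennreal_leI)
    also have "\<dots> = ennreal (K * (b - a))"
      using assms(1,2) by (simp add: nn_integral_cmult_indicator ennreal_mult)
    finally show ?thesis .
  qed
  then have "prob {a<..b} \<le> K * (b - a)"
    using assms(1,2) by (simp add: emeasure_eq_measure)
  ultimately show ?thesis by simp
qed

lemma Phi_diff_abs_le:
  assumes "0 \<le> K" "\<And>x. min a b \<le> x \<Longrightarrow> x \<le> max a b \<Longrightarrow> std_normal_density x \<le> K"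
  shows "\<bar>Phi b - Phi a\<bar> \<le> K * \<bar>b - a\<bar>"
proof (cases "a \<le> b")
  case True
  then show ?thesis using Phi_diff_le[OF True assms(1)] assms(2) by simp
next
  case False
  then have "\<bar>Phi a - Phi b\<bar> \<le> K * (a - b)" using Phi_diff_le[of b a K] assms by simp
  then show ?thesis using False by (simp add: abs_minus_commute)
qed

lemma std_normal_density_le: "std_normal_density x \<le> 1 / sqrt (2 * pi)"
  unfolding std_normal_density_def by (rule mult_left_le) auto

lemma inv_sqrt_2pi_le_1: "1 / sqrt (2 * pi) \<le> 1"
  using pi_gt3 by (simp add: real_le_rsqrt)

lemma Phi_lipschitz: "\<bar>Phi u - Phi v\<bar> \<le> \<bar>u - v\<bar>"
  using Phi_diff_abs_le[of 1 v u] std_normal_density_le inv_sqrt_2pi_le_1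
  by (fastforce intro: order_trans)

lemma abs_mult_exp_neg_sq_le: "\<bar>z\<bar> * exp (- z\<^sup>2 / 2) \<le> (1::real)"
proof -
  have "\<bar>z\<bar> \<le> 1 + z\<^sup>2 / 2"
    using zero_le_power2[of "\<bar>z\<bar> - 1"] by (simp add: power2_eq_square algebra_simps)
  also have "\<dots> \<le> exp (z\<^sup>2 / 2)" by (rule exp_ge_add_one_self)
  finally have "\<bar>z\<bar> * exp (- z\<^sup>2 / 2) \<le> exp (z\<^sup>2 / 2) * exp (- z\<^sup>2 / 2)"
    by (intro mult_right_mono) auto
  then show ?thesis by (simp add: exp_add[symmetric])
qed

lemma abs_mult_std_normal_density_le: "\<bar>z\<bar> * std_normal_density z \<le> 1"
proof -
  have "\<bar>z\<bar> * std_normal_density z = 1 / sqrt (2 * pi) * (\<bar>z\<bar> * exp (- z\<^sup>2 / 2))"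
    by (simp add: std_normal_density_def)
  also have "\<dots> \<le> 1 / sqrt (2 * pi) * 1"
    by (intro mult_left_mono abs_mult_exp_neg_sq_le) auto
  finally show ?thesis using inv_sqrt_2pi_le_1 by linarith
qed

lemma std_normal_density_between_scaled_le:
  assumes "0 < m" "m \<le> 1" "m \<le> r" "min u (r * u) \<le> x" "x \<le> max u (r * u)"
  shows "std_normal_density x \<le> std_normal_density (m * u)"
proof -
  have "m * \<bar>u\<bar> \<le> \<bar>x\<bar>"
  proof (cases "0 \<le> u")
    case True
    then have "m * u \<le> u" "m * u \<le> r * u"
      using mult_right_mono[of m 1 u] mult_right_mono[of m r u] assms by auto
    then show ?thesis using assms True by auto
  next
    case False
    then have "max u (r * u) \<le> m * u"
      using mult_right_mono_neg[of m 1 u] mult_right_mono_neg[of m r u] assms by auto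
    moreover have "m * \<bar>u\<bar> = - (m * u)" using False by simp
    ultimately show ?thesis using assms(5) abs_ge_minus_self[of x] by linarith
  qed
  then have "(m * u)\<^sup>2 \<le> x\<^sup>2"
    using assms(1) by (metis abs_ge_zero abs_mult abs_of_pos power2_abs power_mono)
  then show ?thesis unfolding std_normal_density_def by (intro mult_left_mono) auto
qed

lemma Phi_scale:
  assumes "0 < r"
  shows "\<bar>Phi (r * u) - Phi u\<bar> \<le> \<bar>r - 1\<bar> / min r 1"
proof -
  define m where "m = min r 1"
  have m: "0 < m" "m \<le> 1" "m \<le> r" using assms by (auto simp: m_def)
  then have "\<bar>Phi (r * u) - Phi u\<bar> \<le> std_normal_density (m * u) * \<bar>r * u - u\<bar>"
    by (intro Phi_diff_abs_le std_normal_density_between_scaled_le) auto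
  also have "\<dots> = \<bar>r - 1\<bar> / m * (\<bar>m * u\<bar> * std_normal_density (m * u))"
  proof -
    have "\<bar>r * u - u\<bar> = \<bar>r - 1\<bar> * \<bar>u\<bar>" by (simp add: abs_mult[symmetric] algebra_simps)
    then show ?thesis using m by (simp add: abs_mult)
  qed
  also have "\<dots> \<le> \<bar>r - 1\<bar> / m"
    using abs_mult_std_normal_density_le m by (intro mult_left_le) auto
  finally show ?thesis by (simp add: m_def)
qed

lemma Phi_affine_compare:
  assumes "0 < A" "0 < a" "\<bar>A / a - 1\<bar> \<le> 1/2"
  shows "\<bar>Phi (A * x + B) - Phi (a * x + \<beta>)\<bar> \<le> \<bar>B - \<beta>\<bar> + \<bar>A / a - 1\<bar> * (\<bar>\<beta>\<bar> + 2)"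
proof -
  define r where "r = A / a"
  define u where "u = a * x + \<beta>"
  have "\<bar>r - 1\<bar> \<le> 1/2" using assms(3) by (simp add: r_def)
  then have r: "0 < r" "1/2 \<le> min r 1" unfolding abs_le_iff by auto
  have "A * x + B = r * u + (B - r * \<beta>)"
    using assms by (simp add: r_def u_def field_simps)
  then have "\<bar>Phi (A * x + B) - Phi (r * u)\<bar> \<le> \<bar>B - r * \<beta>\<bar>"
    using Phi_lipschitz[of "r * u + (B - r * \<beta>)" "r * u"] by (simp only: add_diff_cancel_left')
  also have "\<dots> \<le> \<bar>B - \<beta>\<bar> + \<bar>r - 1\<bar> * \<bar>\<beta>\<bar>"
  proof -
    have "B - r * \<beta> = (B - \<beta>) - (r - 1) * \<beta>" by (simp add: algebra_simps)
    then show ?thesis by (metis abs_mult abs_triangle_ineq4)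
  qed
  finally have "\<bar>Phi (A * x + B) - Phi (r * u)\<bar> \<le> \<bar>B - \<beta>\<bar> + \<bar>r - 1\<bar> * \<bar>\<beta>\<bar>" .
  moreover have "\<bar>Phi (r * u) - Phi u\<bar> \<le> 2 * \<bar>r - 1\<bar>"
  proof -
    have "\<bar>r - 1\<bar> / min r 1 \<le> \<bar>r - 1\<bar> / (1/2)" using r by (intro divide_left_mono) auto
    then show ?thesis using Phi_scale[OF r(1), of u] by simp
  qed
  ultimately show ?thesis unfolding u_def r_def[symmetric] by (simp add: abs_le_iff algebra_simps)
qed

text \<open>The value of \<open>c0 * (1 - c0) * (1 - 2 * c0) / 12\<close>, i.e. \<open>sigma_k\<^sup>2 / s\<^sup>3\<close> at \<open>k = c0 * s\<close>;
  \<open>c0\<close> is the root of \<open>c0 * (1 - c0) = 1/5\<close> in \<open>(0, 1/2)\<close>.\<close>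

definition sigma_coeff :: real where "sigma_coeff = sqrt 5 / 300"

lemma sqrt_5_bounds: "2 < sqrt (5::real)" "sqrt (5::real) < 5/2"
  by (rule real_less_rsqrt, simp) (rule real_less_lsqrt, simp_all add: power2_eq_square)

lemma sigma_coeff_bounds: "0 < sigma_coeff" "sigma_coeff \<le> 1" "sigma_coeff \<le> sqrt sigma_coeff"
proof -
  show "0 < sigma_coeff" "sigma_coeff \<le> 1" using sqrt_5_bounds by (simp_all add: sigma_coeff_def)
  then show "sigma_coeff \<le> sqrt sigma_coeff"
    using real_sqrt_le_mono[of "sigma_coeff * sigma_coeff" sigma_coeff] by (simp add: mult_le_cancel_left1)
qed

lemma c0_bounds: "0 < c0" "c0 < 1/2"
  using sqrt_5_bounds by (simp_all add: c0_def)

lemma c0_identities: "c0 * (1 - c0) = 1/5" "1 - 2 * c0 = sqrt 5 / 5"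
  by (simp_all add: c0_def field_simps algebra_simps)

lemma mu_k_expansion:
  fixes S kk :: real
  shows "kk * (S + 1 - kk) / 2 = S^2 / 10 + sqrt 5 / 10 * S * (kk - c0 * S) - (kk - c0 * S)^2 / 2 + kk / 2"
proof -
  have "kk * (S + 1 - kk) / 2 = c0 * (1 - c0) * S^2 / 2 + (1 - 2 * c0) / 2 * S * (kk - c0 * S)
      - (kk - c0 * S)^2 / 2 + kk / 2"
    by (simp add: field_simps power2_eq_square)
  then show ?thesis by (simp add: c0_identities)
qed

lemma sigma_k_sq_expansion:
  fixes S kk :: real
  defines "e \<equiv> kk - c0 * S"
  shows "kk * (S + 1 - kk) * (S - 2 * kk) / 12 - sigma_coeff * S^3 =
    (- 1/5 * (S^2 * e) - 3 * (sqrt 5 / 5) * (S * e^2) + 2 * e^3 + kk * (S - 2 * kk)) / 12"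
proof -
  define w where "w = 1 - 2 * c0"
  have w: "w = sqrt 5 / 5" "sigma_coeff = w / 60"
    using c0_identities(2) by (simp_all add: w_def sigma_coeff_def)
  have "kk * (S + 1 - kk) * (S - 2 * kk) =
      w / 5 * S^3 - 1/5 * S^2 * e - 3 * w * S * e^2 + 2 * e^3 + kk * (S - 2 * kk)"
    using c0_identities(1) unfolding e_def w_def by algebra
  then have "kk * (S + 1 - kk) * (S - 2 * kk) / 12 - sigma_coeff * S^3 =
      (- 1/5 * (S^2 * e) - 3 * w * (S * e^2) + 2 * e^3 + kk * (S - 2 * kk)) / 12"
    unfolding w(2) by (simp add: field_simps)
  then show ?thesis by (simp only: w(1))
qed

lemma sigma_k_sq_approx:
  fixes S kk :: real
  assumes "0 \<le> kk" "kk \<le> S / 2"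
  shows "\<bar>kk * (S + 1 - kk) * (S - 2 * kk) / 12 - sigma_coeff * S^3\<bar> \<le> (\<bar>kk - c0 * S\<bar> + 1) * S^2 / 3"
proof -
  define e where "e = kk - c0 * S"
  have S: "0 \<le> S" using assms by linarith
  have "0 \<le> c0 * S" "c0 * S \<le> S" using c0_bounds S by (auto intro: mult_left_le_one_le)
  then have e: "\<bar>e\<bar> \<le> S" using assms unfolding e_def by linarith
  have linear: "\<bar>(- 1/5 * a - b + 2 * c + d) / 12\<bar> \<le> (X + Y) / 3"
    if "\<bar>a\<bar> \<le> X" "\<bar>b\<bar> \<le> 3/2 * X" "\<bar>c\<bar> \<le> X" "0 \<le> d" "d \<le> Y" "0 \<le> X"
    for a b c d X Y :: real
    using that unfolding abs_le_iff by argo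
  have ee: "\<bar>e\<bar> * \<bar>e\<bar> \<le> S * \<bar>e\<bar>" using e by (intro mult_right_mono) auto
  have "\<bar>S * e^2\<bar> = S * (\<bar>e\<bar> * \<bar>e\<bar>)" using S by (simp add: abs_mult power2_eq_square)
  also have "\<dots> \<le> S^2 * \<bar>e\<bar>" using ee S by (simp add: mult_left_mono power2_eq_square mult.assoc)
  finally have quad: "\<bar>S * e^2\<bar> \<le> S^2 * \<bar>e\<bar>" .
  have "\<bar>e^3\<bar> = \<bar>e\<bar> * (\<bar>e\<bar> * \<bar>e\<bar>)" by (simp add: abs_mult power3_eq_cube)
  also have "\<dots> \<le> S * (\<bar>e\<bar> * \<bar>e\<bar>)" using e by (intro mult_right_mono) auto
  also have "\<dots> \<le> S^2 * \<bar>e\<bar>" using ee S by (simp add: mult_left_mono power2_eq_square mult.assoc)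
  finally have cubic: "\<bar>e^3\<bar> \<le> S^2 * \<bar>e\<bar>" .
  have "\<bar>3 * (sqrt 5 / 5) * (S * e^2)\<bar> = 3 * (sqrt 5 / 5) * \<bar>S * e^2\<bar>" by (simp add: abs_mult)
  also have "\<dots> \<le> 3 * (1/2) * \<bar>S * e^2\<bar>" using sqrt_5_bounds by (intro mult_right_mono) auto
  finally have "\<bar>3 * (sqrt 5 / 5) * (S * e^2)\<bar> \<le> 3/2 * (S^2 * \<bar>e\<bar>)" using quad by simp
  moreover have "0 \<le> kk * (S - 2 * kk)" "kk * (S - 2 * kk) \<le> S^2"
    using assms by (auto simp: power2_eq_square intro!: mult_mono)
  ultimately have "\<bar>(- 1/5 * (S^2 * e) - 3 * (sqrt 5 / 5) * (S * e^2) + 2 * e^3 + kk * (S - 2 * kk)) / 12\<bar>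
      \<le> (S^2 * \<bar>e\<bar> + S^2) / 3"
    using cubic by (intro linear) (auto simp: abs_mult)
  then show ?thesis unfolding sigma_k_sq_expansion e_def[symmetric] by (simp add: algebra_simps)
qed

lemma sqrt_ratio_dev:
  fixes U W :: real
  assumes "0 \<le> U" "0 < W"
  shows "\<bar>sqrt U / sqrt W - 1\<bar> \<le> \<bar>U - W\<bar> / W"
proof -
  have "U - W = (sqrt U - sqrt W) * (sqrt U + sqrt W)"
    using assms by (simp add: algebra_simps)
  then have "\<bar>U - W\<bar> = \<bar>sqrt U - sqrt W\<bar> * (sqrt U + sqrt W)"
    using assms by (simp add: abs_mult)
  moreover have "\<bar>sqrt U - sqrt W\<bar> * sqrt W \<le> \<bar>sqrt U - sqrt W\<bar> * (sqrt U + sqrt W)"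
    using assms by (intro mult_left_mono) auto
  ultimately have "\<bar>sqrt U - sqrt W\<bar> * sqrt W / (sqrt W * sqrt W) \<le> \<bar>U - W\<bar> / (sqrt W * sqrt W)"
    using assms by (intro divide_right_mono) auto
  moreover have "sqrt U / sqrt W - 1 = (sqrt U - sqrt W) / sqrt W" using assms by (simp add: field_simps)
  moreover have "\<bar>sqrt U - sqrt W\<bar> * sqrt W / W = \<bar>sqrt U - sqrt W\<bar> / sqrt W"
    using assms real_div_sqrt[of W] by (simp add: field_simps)
  ultimately show ?thesis using assms by (simp add: abs_divide)
qed

lemma sigma_k_sq:
  assumes "0 < k" "real k < real s / 2"
  shows "(sigma_k s k)\<^sup>2 = real k * (real s + 1 - real k) * (real s - 2 * real k) / 12"
    and "0 < sigma_k s k"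
  using assms by (simp_all add: sigma_k_def)

lemma k0_floor: "real_of_int (k0 s) \<le> c0 * real s" "c0 * real s < real_of_int (k0 s) + 1"
  unfolding k0_def by linarith+

lemma k_dev_le_t_k:
  assumes "0 < s"
  shows "\<bar>real k - c0 * real s\<bar> + 1 \<le> \<bar>t_k s k\<bar> * sqrt s + 2"
proof -
  define d where "d = real k - real_of_int (k0 s)"
  have "\<bar>real k - c0 * real s - d\<bar> \<le> 1"
    using k0_floor[of s] unfolding d_def by linarith
  moreover have "\<bar>d\<bar> \<le> \<bar>t_k s k\<bar> * sqrt s"
  proof -
    have "1 \<le> (5::real) powr (3/4)" by (simp add: ge_one_powr_ge_zero)
    then have "1 * \<bar>d\<bar> \<le> 5 powr (3/4) * \<bar>d\<bar>" by (rule mult_right_mono) simp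
    also have "\<dots> = \<bar>t_k s k\<bar> * sqrt s" using assms by (simp add: t_k_def d_def abs_mult)
    finally show ?thesis by simp
  qed
  ultimately show ?thesis by linarith
qed

lemma divide_sqrt_mult_self: "0 < x \<Longrightarrow> a / sqrt x * x = a * sqrt x"
  by (simp add: field_simps real_div_sqrt)

lemma sigma_k_sq_rel_approx:
  assumes "0 < s" "0 < k" "real k < real s / 2"
  shows "\<bar>(sigma_k s k)\<^sup>2 - sigma_coeff * real s ^ 3\<bar> \<le> (\<bar>t_k s k\<bar> + 2) / sqrt s * real s ^ 3 / 3"
proof -
  have "\<bar>(sigma_k s k)\<^sup>2 - sigma_coeff * real s ^ 3\<bar> \<le> (\<bar>real k - c0 * real s\<bar> + 1) * real s ^ 2 / 3"
    unfolding sigma_k_sq(1)[OF assms(2,3)] using sigma_k_sq_approx[of "real k" "real s"] assms by simp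
  also have "\<dots> \<le> (\<bar>t_k s k\<bar> + 2) * sqrt s * real s ^ 2 / 3"
  proof -
    have "1 \<le> sqrt s" using assms by simp
    then have "\<bar>t_k s k\<bar> * sqrt s + 2 \<le> (\<bar>t_k s k\<bar> + 2) * sqrt s" by (simp add: algebra_simps)
    then show ?thesis using k_dev_le_t_k[OF assms(1), of k] by (intro divide_right_mono mult_right_mono) auto
  qed
  also have "\<dots> = (\<bar>t_k s k\<bar> + 2) / sqrt s * real s ^ 3 / 3"
    using divide_sqrt_mult_self[of "real s" "\<bar>t_k s k\<bar> + 2"] assms by (simp add: power3_eq_cube power2_eq_square flip: mult.assoc)
  finally show ?thesis .
qed

lemma core_var_rel_approx:
  assumes "0 < s"
  shows "\<bar>5/8 * core_var s - sigma_coeff * real s ^ 3\<bar> \<le> 5/8 * ((\<bar>t_k s k\<bar> + 2) / sqrt s * real s ^ 3)"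
proof -
  have eq: "5/8 * core_var s - sigma_coeff * real s ^ 3 = 5/8 * (core_var s - 2 * sqrt 5 / 375 * real s ^ 3)"
    by (simp add: sigma_coeff_def field_simps)
  have "\<bar>5/8 * core_var s - sigma_coeff * real s ^ 3\<bar> = 5/8 * \<bar>core_var s - 2 * sqrt 5 / 375 * real s ^ 3\<bar>"
    unfolding eq abs_mult by simp
  also have "\<dots> \<le> 5/8 * (2 * real s ^ 2)" using core_var_approx assms by simp
  also have "\<dots> \<le> 5/8 * ((\<bar>t_k s k\<bar> + 2) * sqrt s * real s ^ 2)"
  proof -
    have "2 \<le> (\<bar>t_k s k\<bar> + 2) * sqrt s"
      using assms mult_right_mono[of 1 "sqrt s" "\<bar>t_k s k\<bar> + 2"] by (simp add: mult.commute)
    then show ?thesis by (intro mult_left_mono mult_right_mono) auto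
  qed
  also have "\<dots> = 5/8 * ((\<bar>t_k s k\<bar> + 2) / sqrt s * real s ^ 3)"
    using divide_sqrt_mult_self[of "real s" "\<bar>t_k s k\<bar> + 2"] assms by (simp add: power3_eq_cube power2_eq_square flip: mult.assoc)
  finally show ?thesis .
qed

text \<open>This is why \<open>5 powr (3/4)\<close> normalises \<open>t_k\<close>: it makes \<open>sqrt (3/5) * t_k s k\<close> times
  \<open>sqrt (sigma_coeff * s\<^sup>3)\<close> equal to \<open>sqrt 5 / 10 * s * (k - k0 s)\<close>, matching the linear term
  \<open>sqrt 5 / 10 * s * (k - c0 * s)\<close> of \<open>mu_k s k\<close>.\<close>

lemma slope_identity: "sqrt (3/5) * 5 powr (3/4) * sqrt sigma_coeff = sqrt 5 / 10"
proof (rule power2_eq_imp_eq)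
  have "((5::real) powr (3/4))\<^sup>2 = 5 powr (1 + 1/2)"
    by (simp add: powr_power)
  also have "\<dots> = 5 * sqrt 5" by (subst powr_add) (simp add: powr_half_sqrt)
  finally show "(sqrt (3/5) * 5 powr (3/4) * sqrt sigma_coeff)\<^sup>2 = (sqrt 5 / 10)\<^sup>2"
    by (simp add: power_mult_distrib power_divide sigma_coeff_def)
qed (simp_all add: sigma_coeff_def)

lemma mean_shift_identity:
  fixes s k :: nat
  assumes "0 < s"
  defines "e \<equiv> real k - c0 * real s" and "d \<equiv> real k - real_of_int (k0 s)"
  shows "core_mean s - mu_k s k + sqrt (3/5) * t_k s k * sqrt (sigma_coeff * real s ^ 3) =
    (core_mean s - real s ^ 2 / 10) - sqrt 5 / 10 * real s * (e - d) + e^2 / 2 - real k / 2"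
proof -
  have sqrt_G: "sqrt (sigma_coeff * real s ^ 3) = sqrt sigma_coeff * real s * sqrt s"
    by (simp add: real_sqrt_mult power3_eq_cube)
  have "t_k s k = 5 powr (3/4) * d / sqrt s" by (simp add: t_k_def d_def)
  then have "sqrt (3/5) * t_k s k * sqrt (sigma_coeff * real s ^ 3) =
      (sqrt (3/5) * 5 powr (3/4) * sqrt sigma_coeff) * real s * d"
    unfolding sqrt_G using assms(1) by (simp add: field_simps)
  also have "\<dots> = sqrt 5 / 10 * real s * d" by (simp only: slope_identity)
  finally have shift: "sqrt (3/5) * t_k s k * sqrt (sigma_coeff * real s ^ 3) = sqrt 5 / 10 * real s * d" .
  have mu: "mu_k s k = real s ^ 2 / 10 + sqrt 5 / 10 * real s * e - e^2 / 2 + real k / 2"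
    using mu_k_expansion[of "real k" "real s"] by (simp add: mu_k_def e_def)
  show ?thesis unfolding shift mu by (simp add: field_simps)
qed

lemma mean_shift_numerator_bound:
  fixes s k :: nat
  assumes "0 < s" "real k < real s / 2"
  defines "e \<equiv> real k - c0 * real s" and "d \<equiv> real k - real_of_int (k0 s)"
  shows "\<bar>(core_mean s - real s ^ 2 / 10) - sqrt 5 / 10 * real s * (e - d) + e^2 / 2 - real k / 2\<bar>
    \<le> 7 * (1 + (t_k s k)\<^sup>2) * real s"
proof -
  define S t where "S = real s" and "t = t_k s k"
  have S: "1 \<le> S" "0 < sqrt S" "S = sqrt S * sqrt S" using assms(1) by (simp_all add: S_def)
  have "\<bar>e - d\<bar> \<le> 1" using k0_floor[of s] by (simp add: e_def d_def abs_le_iff)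
  moreover have "sqrt 5 / 10 \<le> (1::real)" using sqrt_5_bounds by simp
  ultimately have slope_term: "\<bar>sqrt 5 / 10 * S * (e - d)\<bar> \<le> 1 * S * 1"
    unfolding abs_mult using S by (intro mult_mono) auto
  have "\<bar>e\<bar> \<le> \<bar>t\<bar> * sqrt S + 2" using k_dev_le_t_k[OF assms(1), of k] by (simp add: e_def t_def S_def)
  then have "\<bar>e\<bar>^2 \<le> (\<bar>t\<bar> * sqrt S + 2)^2" by (intro power_mono) auto
  also have "\<dots> \<le> 2 * t^2 * S + 8"
    using zero_le_power2[of "\<bar>t\<bar> * sqrt S - 2"] S by (simp add: power2_eq_square algebra_simps)
  finally have e_sq: "e^2 \<le> 2 * t^2 * S + 8" by simp
  have "\<bar>(core_mean s - S^2 / 10) - sqrt 5 / 10 * S * (e - d) + e^2 / 2 - real k / 2\<bar>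
      \<le> \<bar>core_mean s - S^2 / 10\<bar> + \<bar>sqrt 5 / 10 * S * (e - d)\<bar> + e^2 / 2 + real k / 2"
    using abs_ge_self[of "core_mean s - S^2 / 10"] abs_ge_minus_self[of "core_mean s - S^2 / 10"]
      abs_ge_self[of "sqrt 5 / 10 * S * (e - d)"] abs_ge_minus_self[of "sqrt 5 / 10 * S * (e - d)"]
      zero_le_power2[of e]
    by (intro abs_leI) linarith+
  also have "\<dots> \<le> S + S + (t^2 * S + 4) + S / 4"
    using core_mean_approx assms slope_term e_sq by (intro add_mono) (auto simp: S_def)
  also have "\<dots> \<le> 7 * (1 + t^2) * S"
  proof -
    have "0 \<le> t^2 * S" using S by simp
    moreover have "7 * (1 + t^2) * S = 7 * S + 7 * (t^2 * S)" by (simp add: algebra_simps)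
    ultimately show ?thesis using S(1) by linarith
  qed
  finally show ?thesis by (simp add: S_def t_def)
qed

lemma mean_shift_approx:
  assumes "0 < s" "real k < real s / 2"
  shows "\<bar>(core_mean s - mu_k s k) / sqrt (sigma_coeff * real s ^ 3) + sqrt (3/5) * t_k s k\<bar>
    \<le> 7 / sqrt sigma_coeff * (1 + (t_k s k)\<^sup>2) / sqrt s"
proof -
  define D where "D = sqrt sigma_coeff * real s * sqrt s"
  have D: "0 < D" "sqrt (sigma_coeff * real s ^ 3) = D"
    using assms(1) sigma_coeff_bounds by (simp_all add: D_def real_sqrt_mult power3_eq_cube)
  have "(core_mean s - mu_k s k) / sqrt (sigma_coeff * real s ^ 3) + sqrt (3/5) * t_k s k =
      (core_mean s - mu_k s k + sqrt (3/5) * t_k s k * sqrt (sigma_coeff * real s ^ 3)) / D"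
    using D by (simp add: field_simps)
  then have "\<bar>(core_mean s - mu_k s k) / sqrt (sigma_coeff * real s ^ 3) + sqrt (3/5) * t_k s k\<bar>
      \<le> 7 * (1 + (t_k s k)\<^sup>2) * real s / D"
    unfolding mean_shift_identity[OF assms(1)] using D mean_shift_numerator_bound[OF assms]
    by (simp add: abs_divide divide_right_mono)
  also have "\<dots> = 7 / sqrt sigma_coeff * (1 + (t_k s k)\<^sup>2) / sqrt s"
    using assms(1) by (simp add: D_def)
  finally show ?thesis .
qed

lemma abs_plus_two_le: "\<bar>t\<bar> + 2 \<le> 3 * (1 + t\<^sup>2)" and abs_plus_two_sq_le: "(\<bar>t\<bar> + 2)\<^sup>2 \<le> 8 * (1 + t\<^sup>2)"
  for t :: real
proof -
  have "\<bar>t\<bar> \<le> 1 + t\<^sup>2" using zero_le_power2[of "\<bar>t\<bar> - 1"] by (simp add: power2_eq_square algebra_simps)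
  then show "\<bar>t\<bar> + 2 \<le> 3 * (1 + t\<^sup>2)" using zero_le_power2[of t] by argo
  have "4 * \<bar>t\<bar> \<le> t\<^sup>2 + 4" using zero_le_power2[of "\<bar>t\<bar> - 2"] by (simp add: power2_eq_square algebra_simps)
  moreover have "(\<bar>t\<bar> + 2)\<^sup>2 = t\<^sup>2 + 4 * \<bar>t\<bar> + 4" by (simp add: power2_eq_square algebra_simps)
  ultimately show "(\<bar>t\<bar> + 2)\<^sup>2 \<le> 8 * (1 + t\<^sup>2)" using zero_le_power2[of t] by argo
qed

text \<open>In this regime \<open>sigma_k\<^sup>2\<close> and \<open>5/8 * core_var s\<close> stay within a factor \<open>2\<close> of
  \<open>sigma_coeff * s\<^sup>3\<close>; the factor \<open>5/8\<close> is the square of the reciprocal slope of \<open>y_k_star\<close>.\<close>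

context
  fixes s k :: nat
  assumes s_pos: "0 < s" and k_pos: "0 < k" and k_less: "real k < real s / 2"
    and central: "(\<bar>t_k s k\<bar> + 2) / sqrt s \<le> sigma_coeff / 4"
begin

lemma central_variance_ratios:
  defines "\<epsilon> \<equiv> (\<bar>t_k s k\<bar> + 2) / sqrt s" and "G \<equiv> sigma_coeff * real s ^ 3"
  shows "0 < core_var s"
    and "\<bar>sqrt G / sigma_k s k - 1\<bar> \<le> 2 * \<epsilon> / (3 * sigma_coeff)"
    and "\<bar>sqrt (5/8 * core_var s) / sigma_k s k - 1\<bar> \<le> 2 * \<epsilon> / sigma_coeff"
proof -
  define W U where "W = (sigma_k s k)\<^sup>2" and "U = 5/8 * core_var s"
  have sigma_k: "sigma_k s k = sqrt W" using sigma_k_sq(2)[OF k_pos k_less] by (simp add: W_def)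
  have G: "0 < G" using s_pos sigma_coeff_bounds by (simp add: G_def)
  have "\<epsilon> * real s ^ 3 \<le> G / 4"
    using mult_right_mono[OF central, of "real s ^ 3"] by (simp add: \<epsilon>_def G_def)
  moreover have "\<bar>W - G\<bar> \<le> \<epsilon> * real s ^ 3 / 3" "\<bar>U - G\<bar> \<le> 5/8 * (\<epsilon> * real s ^ 3)"
    using sigma_k_sq_rel_approx[OF s_pos k_pos k_less] core_var_rel_approx[OF s_pos]
    by (simp_all add: W_def U_def G_def \<epsilon>_def)
  moreover have eps_nonneg: "0 \<le> \<epsilon>" by (simp add: \<epsilon>_def)
  ultimately have W: "G / 2 \<le> W" "\<bar>G - W\<bar> \<le> \<epsilon> * real s ^ 3 / 3"
    and U: "G / 2 \<le> U" "\<bar>U - W\<bar> \<le> \<epsilon> * real s ^ 3"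
    using s_pos unfolding abs_le_iff by auto
  show "0 < core_var s" using U G by (simp add: U_def)
  have G_eps: "\<epsilon> * real s ^ 3 / (G / 2) = 2 * \<epsilon> / sigma_coeff"
    "(\<epsilon> * real s ^ 3 / 3) / (G / 2) = 2 * \<epsilon> / (3 * sigma_coeff)"
    using s_pos sigma_coeff_bounds by (simp_all add: G_def)
  have "\<bar>sqrt G / sqrt W - 1\<bar> \<le> \<bar>G - W\<bar> / W"
    using G W by (intro sqrt_ratio_dev) auto
  also have "\<dots> \<le> (\<epsilon> * real s ^ 3 / 3) / (G / 2)"
    using G W eps_nonneg by (intro frac_le) auto
  finally show "\<bar>sqrt G / sigma_k s k - 1\<bar> \<le> 2 * \<epsilon> / (3 * sigma_coeff)"
    using G_eps sigma_k by simp
  have "\<bar>sqrt U / sqrt W - 1\<bar> \<le> \<bar>U - W\<bar> / W"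
    using G U W by (intro sqrt_ratio_dev) auto
  also have "\<dots> \<le> (\<epsilon> * real s ^ 3) / (G / 2)"
    using G U W eps_nonneg by (intro frac_le) auto
  finally show "\<bar>sqrt (5/8 * core_var s) / sigma_k s k - 1\<bar> \<le> 2 * \<epsilon> / sigma_coeff"
    using G_eps sigma_k by (simp add: U_def)
qed

lemma central_eps_small: "2 * ((\<bar>t_k s k\<bar> + 2) / sqrt s) / sigma_coeff \<le> 1/2"
proof -
  have "2 * x / sigma_coeff \<le> 1/2" if "x \<le> sigma_coeff / 4" for x :: real
    using that sigma_coeff_bounds by (simp add: field_simps)
  then show ?thesis using central .
qed

lemma central_shift_bound:
  "\<bar>(core_mean s - mu_k s k) / sigma_k s k + sqrt (3/5) * t_k s k\<bar>
    \<le> 27/2 / sigma_coeff * ((1 + (t_k s k)\<^sup>2) / sqrt s)"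
proof -
  define t \<epsilon> T G where "t = t_k s k" and "\<epsilon> = (\<bar>t\<bar> + 2) / sqrt s"
    and "T = (1 + t\<^sup>2) / sqrt s" and "G = sigma_coeff * real s ^ 3"
  define X Z where "X = (core_mean s - mu_k s k) / sqrt G + sqrt (3/5) * t"
    and "Z = sqrt G / sigma_k s k - 1"
  note \<gamma> = sigma_coeff_bounds(1,3)
  have Z: "\<bar>Z\<bar> \<le> 2 * \<epsilon> / (3 * sigma_coeff)"
    using central_variance_ratios(2) by (simp add: Z_def G_def \<epsilon>_def t_def)
  have "2 * \<epsilon> / sigma_coeff \<le> 1/2" unfolding \<epsilon>_def t_def by (rule central_eps_small)
  then have "\<bar>Z\<bar> \<le> 1/6" using Z by simp
  have "\<bar>X\<bar> \<le> 7 / sqrt sigma_coeff * T"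
    using mean_shift_approx[OF s_pos k_less] by (simp add: X_def G_def T_def t_def)
  also have "\<dots> \<le> 7 / sigma_coeff * T"
    using \<gamma> by (intro mult_right_mono divide_left_mono) (auto simp: T_def)
  finally have X_term: "\<bar>X\<bar> * (1 + \<bar>Z\<bar>) \<le> 7 / sigma_coeff * T * (7/6)"
    using \<open>\<bar>Z\<bar> \<le> 1/6\<close> by (intro mult_mono) auto
  have Z_term: "\<bar>sqrt (3/5) * t\<bar> * \<bar>Z\<bar> \<le> 16/3 / sigma_coeff * T"
  proof -
    have "\<bar>sqrt (3/5) * t\<bar> \<le> \<bar>t\<bar>" by (simp add: abs_mult mult_left_le_one_le)
    then have "\<bar>sqrt (3/5) * t\<bar> * \<bar>Z\<bar> \<le> (\<bar>t\<bar> + 2) * (2 * \<epsilon> / (3 * sigma_coeff))"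
      using Z by (intro mult_mono) auto
    also have "\<dots> = 2 / (3 * sigma_coeff) * ((\<bar>t\<bar> + 2) * \<epsilon>)" by simp
    also have "\<dots> \<le> 2 / (3 * sigma_coeff) * (8 * (1 + t\<^sup>2) / sqrt s)"
      using abs_plus_two_sq_le[of t] \<gamma>
      by (intro mult_left_mono) (auto simp: \<epsilon>_def power2_eq_square divide_right_mono)
    finally show ?thesis by (simp add: T_def)
  qed
  have "(core_mean s - mu_k s k) / sigma_k s k + sqrt (3/5) * t = X * (1 + Z) - sqrt (3/5) * t * Z"
    using sigma_k_sq(2)[OF k_pos k_less] \<gamma> s_pos by (simp add: X_def Z_def G_def field_simps)
  then have "\<bar>(core_mean s - mu_k s k) / sigma_k s k + sqrt (3/5) * t\<bar>
      \<le> \<bar>X * (1 + Z)\<bar> + \<bar>sqrt (3/5) * t * Z\<bar>"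
    by (simp only: abs_triangle_ineq4)
  also have "\<dots> \<le> \<bar>X\<bar> * (1 + \<bar>Z\<bar>) + \<bar>sqrt (3/5) * t\<bar> * \<bar>Z\<bar>"
    unfolding abs_mult using abs_triangle_ineq[of 1 Z] by (intro add_mono mult_left_mono) auto
  also have "\<dots> \<le> 7 / sigma_coeff * T * (7/6) + 16/3 / sigma_coeff * T"
    using X_term Z_term by (rule add_mono)
  also have "\<dots> = 27/2 / sigma_coeff * T" using \<gamma> by (simp add: field_simps)
  finally show ?thesis by (simp add: T_def t_def)
qed

lemma central_scale_bound:
  defines "r \<equiv> sqrt (core_var s) / sigma_k s k / sqrt (8/5)"
  shows "\<bar>r - 1\<bar> \<le> 1/2"
    and "\<bar>r - 1\<bar> * (\<bar>sqrt (3/5) * t_k s k\<bar> + 2) \<le> 16 / sigma_coeff * ((1 + (t_k s k)\<^sup>2) / sqrt s)"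
proof -
  define t \<epsilon> where "t = t_k s k" and "\<epsilon> = (\<bar>t_k s k\<bar> + 2) / sqrt s"
  have "r = sqrt (5/8 * core_var s) / sigma_k s k"
    by (simp add: r_def real_sqrt_mult real_sqrt_divide field_simps)
  then have ratio: "\<bar>r - 1\<bar> \<le> 2 * \<epsilon> / sigma_coeff"
    using central_variance_ratios(3) by (simp add: \<epsilon>_def)
  moreover have "2 * \<epsilon> / sigma_coeff \<le> 1/2" unfolding \<epsilon>_def by (rule central_eps_small)
  ultimately show "\<bar>r - 1\<bar> \<le> 1/2" by linarith
  have "\<bar>sqrt (3/5) * t\<bar> \<le> \<bar>t\<bar>" by (simp add: abs_mult mult_left_le_one_le)
  then have "\<bar>r - 1\<bar> * (\<bar>sqrt (3/5) * t\<bar> + 2) \<le> 2 * \<epsilon> / sigma_coeff * (\<bar>t\<bar> + 2)"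
    using ratio by (intro mult_mono) auto
  also have "\<dots> = 2 / sigma_coeff * ((\<bar>t\<bar> + 2) * \<epsilon>)" by simp
  also have "\<dots> \<le> 2 / sigma_coeff * (8 * (1 + t\<^sup>2) / sqrt s)"
    using abs_plus_two_sq_le[of t] sigma_coeff_bounds
    by (intro mult_left_mono) (auto simp: \<epsilon>_def t_def power2_eq_square divide_right_mono)
  finally show "\<bar>r - 1\<bar> * (\<bar>sqrt (3/5) * t_k s k\<bar> + 2) \<le> 16 / sigma_coeff * ((1 + (t_k s k)\<^sup>2) / sqrt s)"
    by (simp add: t_def)
qed

lemma central_estimate:
  "\<bar>Phi (y_k s k x) - Phi (y_k_star s k x)\<bar> \<le> 30 / sigma_coeff / sqrt s * (1 + (t_k s k)\<^sup>2)"
proof -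
  define A B a \<beta> where "A = sqrt (core_var s) / sigma_k s k"
    and "B = (core_mean s - mu_k s k) / sigma_k s k" and "a = sqrt (8/5::real)"
    and "\<beta> = - (sqrt (3/5) * t_k s k)"
  define T where "T = (1 + (t_k s k)\<^sup>2) / sqrt s"
  have sigma_k: "0 < sigma_k s k" using sigma_k_sq(2)[OF k_pos k_less] .
  have y: "y_k s k x = A * x + B" "y_k_star s k x = a * x + \<beta>"
    using sigma_k by (simp_all add: y_k_def y_k_star_def A_def B_def a_def \<beta>_def add_divide_distrib)
  have "\<bar>Phi (A * x + B) - Phi (a * x + \<beta>)\<bar> \<le> \<bar>B - \<beta>\<bar> + \<bar>A / a - 1\<bar> * (\<bar>\<beta>\<bar> + 2)"
    using central_scale_bound(1) central_variance_ratios(1) sigma_k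
    by (intro Phi_affine_compare) (auto simp: A_def a_def)
  also have "\<dots> \<le> 27/2 / sigma_coeff * T + 16 / sigma_coeff * T"
    using central_shift_bound central_scale_bound(2)
    unfolding A_def B_def a_def \<beta>_def T_def diff_minus_eq_add abs_minus_cancel
    by (rule add_mono)
  also have "\<dots> = (27/2 + 16) / sigma_coeff * T" by (simp add: add_divide_distrib distrib_right)
  also have "\<dots> \<le> 30 / sigma_coeff * T"
    using sigma_coeff_bounds by (intro mult_right_mono divide_right_mono) (auto simp: T_def)
  finally show ?thesis unfolding y by (simp add: T_def)
qed

end

lemma noncentral_estimate:
  fixes s :: nat
  assumes "sigma_coeff / 4 < (\<bar>t\<bar> + 2) / sqrt s"
  shows "\<bar>Phi u - Phi v\<bar> \<le> 30 / sigma_coeff / sqrt s * (1 + t\<^sup>2)"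
proof -
  define \<epsilon> where "\<epsilon> = (\<bar>t\<bar> + 2) / sqrt s"
  have "\<bar>Phi u - Phi v\<bar> \<le> 1"
    using Phi_bounds[of u] Phi_bounds[of v] by linarith
  also have "\<dots> \<le> 4 / sigma_coeff * \<epsilon>"
    using assms sigma_coeff_bounds by (simp add: \<epsilon>_def[symmetric] field_simps)
  also have "\<dots> \<le> 4 / sigma_coeff * (3 * (1 + t\<^sup>2) / sqrt s)"
    using divide_right_mono[OF abs_plus_two_le[of t], of "sqrt s"] sigma_coeff_bounds
    by (intro mult_left_mono) (auto simp: \<epsilon>_def)
  also have "\<dots> = 12 / sigma_coeff * ((1 + t\<^sup>2) / sqrt s)" by simp
  also have "\<dots> \<le> 30 / sigma_coeff * ((1 + t\<^sup>2) / sqrt s)"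
    using sigma_coeff_bounds by (intro mult_right_mono divide_right_mono) auto
  finally show ?thesis by simp
qed

theorem corollary5:
  shows "\<exists>C::real. \<forall>s::nat. \<forall>k::nat. \<forall>x::real.
           0 < s \<longrightarrow> 0 < k \<longrightarrow> real k < real s / 2 \<longrightarrow>
           \<bar>Phi (y_k s k x) - Phi (y_k_star s k x)\<bar> \<le> C / sqrt (real s) * (1 + (t_k s k)\<^sup>2)"
proof (intro exI[of _ "30 / sigma_coeff"] allI impI)
  fix s k :: nat and x :: real
  assume "0 < s" "0 < k" "real k < real s / 2"
  then show "\<bar>Phi (y_k s k x) - Phi (y_k_star s k x)\<bar> \<le> 30 / sigma_coeff / sqrt s * (1 + (t_k s k)\<^sup>2)"
    using central_estimate noncentral_estimate by (cases "(\<bar>t_k s k\<bar> + 2) / sqrt s \<le> sigma_coeff / 4") auto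
qed

end
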